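(* Let $G$ satisfy conditions (1)–(5) below, with $d$ vertices and genus $g$, and let $C_G\subset\mathbb{P}^{d-g}$ be the union of lines defined by an admissible labeling of $\tilde G$ (see context). Suppose $w$ is a vertex of degree $3$ whose edges are labeled $e_j$, $e_k$, $e_j-e_k$. If we interchange the labels $e_j$ and $e_j-e_k$ on the edges meeting at $w$, then the union of lines associated to the new labeling is the image of the original $C_G$ under a linear automorphism $\sigma$ of $\mathbb{P}^{d-g}$ that is an involution ($\sigma^2=\mathrm{id}$).
   Context: Work over an algebraically closed field $k$ of characteristic zero, $S=k[x_0,\ldots,x_{d-g}]$. Conditions on the finite graph $G=(V,E)$, $d=|V|$, $g=|E|-d+1$: (1) connected; (2) simple; (3) every vertex has degree at most $3$ and some vertex has degree less than $3$; (4) the shortest path between any two distinct vertices of degree $3$ has at least $3$ edges; (5) no triangles. Let $\tilde G$ be obtained from $G$ by attaching one loop at each vertex of degree $1$. An admissible labeling of the edges of $\tilde G$: for each vertex of degree $3$ choose two indices $j\neq k$ in $\{0,\ldots,d-g\}$ and label its three edges $e_j,e_k,e_j-e_k$; label each remaining edge $e_i$ with an unused index, distinct indices being used throughout. An index $i$ appears on an edge labeled $e_i$ or $\pm(e_i-e_j)$. For each vertex $v$: if $v$ has degree $3$ with edges $e_j,e_k,e_j-e_k$, $I_v=(x_i : i\neq j,k)$; otherwise $I_v$ is generated by the $x_i$ with $i$ not appearing on an edge of $\tilde G$ at $v$, together with $x_j-x_k$ if some edge at $v$ is labeled $e_j-e_k$. Then $L_v=V(I_v)$ is a line and $C_G=\bigcup_v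 L_v$. *)

theory Defs
  imports "HOL-Computational_Algebra.Polynomial" "Jordan_Normal_Form.Matrix"
begin

definition deg :: "'v set set \<Rightarrow> 'v \<Rightarrow> nat" where
  "deg E v = card {e \<in> E. v \<in> e}"

definition adj :: "'v set set \<Rightarrow> 'v \<Rightarrow> 'v \<Rightarrow> bool" where
  "adj E u v \<longleftrightarrow> u \<noteq> v \<and> {u, v} \<in> E"

definition simple_graph :: "'v set \<Rightarrow> 'v set set \<Rightarrow> bool" where
  "simple_graph V E \<longleftrightarrow> finite V \<and>
     (\<forall>e \<in> E. \<exists>u v. u \<in> V \<and> v \<in> V \<and> u \<noteq> v \<and> e = {u, v})"

definition connected_graph :: "'v set \<Rightarrow> 'v set set \<Rightarrow> bool" where
  "connected_graph V E \<longleftrightarrow> V \<noteq> {} \<and> (\<forall>u \<in> V. \<forall>v \<in> V. (adj E)\<^sup>*\<^sup>* u v)"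

definition good_graph :: "'v set \<Rightarrow> 'v set set \<Rightarrow> bool" where
  "good_graph V E \<longleftrightarrow>
     connected_graph V E \<and>
     simple_graph V E \<and>
     (\<forall>v \<in> V. deg E v \<le> 3) \<and> (\<exists>v \<in> V. deg E v < 3) \<and>
     \<comment> \<open>(4): no path with 1 or 2 edges joins two distinct degree-3 vertices\<close>
     (\<forall>u \<in> V. \<forall>v \<in> V. u \<noteq> v \<and> deg E u = 3 \<and> deg E v = 3 \<longrightarrow>
         \<not> adj E u v \<and> \<not> (\<exists>x. adj E u x \<and> adj E x v)) \<and>
     \<comment> \<open>(5): no triangles\<close>
     \<not> (\<exists>a b c. adj E a b \<and> adj E b c \<and> adj E a c)"

text \<open>d = |V|, g = |E| - d + 1, and the ambient space is P^(d-g).\<close>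
definition genus :: "'v set \<Rightarrow> 'v set set \<Rightarrow> int" where
  "genus V E = int (card E) - int (card V) + 1"

definition pdim :: "'v set \<Rightarrow> 'v set set \<Rightarrow> nat" where
  "pdim V E = nat (int (card V) - genus V E)"

datatype 'v tedge = GEdge "'v set" | Loop 'v

definition tedges :: "'v set \<Rightarrow> 'v set set \<Rightarrow> 'v tedge set" where
  "tedges V E = GEdge ` E \<union> Loop ` {v \<in> V. deg E v = 1}"

fun incident :: "'v tedge \<Rightarrow> 'v \<Rightarrow> bool" where
  "incident (GEdge e) v \<longleftrightarrow> v \<in> e"
| "incident (Loop u) v \<longleftrightarrow> u = v"

text \<open>A label is either e_i (Single i) or e_j - e_k (Diff j k).\<close>
datatype label = Single nat | Diff nat nat

fun lidx :: "label \<Rightarrow> nat set" where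
  "lidx (Single i) = {i}"
| "lidx (Diff j k) = {j, k}"

definition edges_at :: "'v set \<Rightarrow> 'v set set \<Rightarrow> 'v \<Rightarrow> 'v tedge set" where
  "edges_at V E v = {t \<in> tedges V E. incident t v}"

definition admissible :: "'v set \<Rightarrow> 'v set set \<Rightarrow> ('v tedge \<Rightarrow> label) \<Rightarrow> bool" where
  "admissible V E lab \<longleftrightarrow>
     \<comment> \<open>all indices lie in {0..d-g}\<close>
     (\<forall>t \<in> tedges V E. lidx (lab t) \<subseteq> {0..pdim V E}) \<and>
     \<comment> \<open>at a degree-3 vertex the three edges carry e_j, e_k, e_j - e_k\<close>
     (\<forall>v \<in> V. deg E v = 3 \<longrightarrow>
        (\<exists>j k. j \<noteq> k \<and> inj_on lab (edges_at V E v) \<and>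
               lab ` edges_at V E v = {Single j, Single k, Diff j k})) \<and>
     \<comment> \<open>the remaining edges carry some e_i\<close>
     (\<forall>t \<in> tedges V E. (\<not> (\<exists>v \<in> V. deg E v = 3 \<and> incident t v)) \<longrightarrow>
        (\<exists>i. lab t = Single i)) \<and>
     \<comment> \<open>distinct indices are used throughout\<close>
     (\<forall>t1 \<in> tedges V E. \<forall>t2 \<in> tedges V E. t1 \<noteq> t2 \<and> lidx (lab t1) \<inter> lidx (lab t2) \<noteq> {}
        \<longrightarrow> (\<exists>v \<in> V. deg E v = 3 \<and> incident t1 v \<and> incident t2 v))"

text \<open>Linear forms in x_0..x_n are represented by their coefficient vectors.\<close>

definition appearing :: "'v set \<Rightarrow> 'v set set \<Rightarrow> ('v tedge \<Rightarrow> label) \<Rightarrow> 'v \<Rightarrow> nat set" where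
  "appearing V E lab v = (\<Union>t \<in> edges_at V E v. lidx (lab t))"

definition ideal_gens ::
  "'v set \<Rightarrow> 'v set set \<Rightarrow> ('v tedge \<Rightarrow> label) \<Rightarrow> 'v \<Rightarrow> 'k::field vec set" where
  "ideal_gens V E lab v =
     (let n = pdim V E in
      {unit_vec (n+1) i | i. i \<le> n \<and> i \<notin> appearing V E lab v} \<union>
      (if deg E v = 3 then {}
       else {unit_vec (n+1) j - unit_vec (n+1) k | j k.
               \<exists>t \<in> edges_at V E v. lab t = Diff j k}))"

text \<open>Points of P^n are represented by nonzero vectors of k^(n+1); a subset of P^n
  by the set of all nonzero vectors representing its points.\<close>
definition line_at ::
  "'v set \<Rightarrow> 'v set set \<Rightarrow> ('v tedge \<Rightarrow> label) \<Rightarrow> 'v \<Rightarrow> 'k::field vec set" where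
  "line_at V E lab v =
     {x \<in> carrier_vec (pdim V E + 1). x \<noteq> 0\<^sub>v (pdim V E + 1) \<and>
        (\<forall>f \<in> ideal_gens V E lab v. f \<bullet> x = 0)}"

definition CG :: "'v set \<Rightarrow> 'v set set \<Rightarrow> ('v tedge \<Rightarrow> label) \<Rightarrow> 'k::field vec set" where
  "CG V E lab = (\<Union>v \<in> V. line_at V E lab v)"

end

theory Submission
  imports Defs
begin

(* The map sigma fixes every coordinate except the k-th, which it replaces by x_j - x_k; it is an
   involution. Since the indices j and k occur only on the three edges at w, the new labeling is the
   old one followed by the involution e_j <-> e_j - e_k on labels. At a vertex v the equations of L_v
   therefore change only in the part involving x_j and x_k, which is governed by which of the labels
   e_j, e_k, e_j - e_k occur at v: all three (v = w), or at most one, and then v is not trivalent by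
   condition (4). In each case sigma carries the equations of L_v to those of the relabeled line. *)

definition reflection_mat :: "nat \<Rightarrow> nat \<Rightarrow> nat \<Rightarrow> 'a::comm_ring_1 mat" where
  "reflection_mat N j k =
     mat N N (\<lambda>(r, s). if r = k then of_bool (s = j) - of_bool (s = k) else of_bool (s = r))"

lemma reflection_mat_carrier: "reflection_mat N j k \<in> carrier_mat N N"
  by (simp add: reflection_mat_def)

lemma row_reflection_mat:
  "r < N \<Longrightarrow> row (reflection_mat N j k) r =
     (if r = k then unit_vec N j - unit_vec N k else unit_vec N r)"
  by (rule eq_vecI) (auto simp: reflection_mat_def unit_vec_def)

lemma reflection_mat_mult_vec_index:
  assumes "j < N" "k < N" "x \<in> carrier_vec N" "r < N"
  shows "(reflection_mat N j k *\<^sub>v x) $ r = (if r = k then x $ j - x $ k else x $ r)"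
  using assms by (simp add: row_reflection_mat reflection_mat_carrier[THEN carrier_matD(1)]
      minus_scalar_prod_distrib[of _ N])

lemma reflection_mat_squared:
  assumes "j \<noteq> k" "j < N" "k < N"
  shows "reflection_mat N j k * reflection_mat N j k = (1\<^sub>m N :: 'a::comm_ring_1 mat)"
proof (rule eq_matI)
  let ?R = "reflection_mat N j k :: 'a mat"
  fix r s assume "r < dim_row (1\<^sub>m N :: 'a mat)" "s < dim_col (1\<^sub>m N :: 'a mat)"
  then have rs: "r < N" "s < N" by auto
  have "(?R * ?R) $$ (r, s) = (?R *\<^sub>v col ?R s) $ r"
    using rs by (simp add: reflection_mat_def)
  also have "\<dots> = (1\<^sub>m N :: 'a mat) $$ (r, s)"
    using rs assms by (simp add: reflection_mat_mult_vec_index reflection_mat_carrier)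
      (simp add: reflection_mat_def)
  finally show "(?R * ?R) $$ (r, s) = (1\<^sub>m N :: 'a mat) $$ (r, s)" .
qed (auto simp: reflection_mat_def)

lemma reflection_mat_involution:
  assumes "j \<noteq> k" "j < N" "k < N" "x \<in> carrier_vec N"
  shows "reflection_mat N j k *\<^sub>v (reflection_mat N j k *\<^sub>v x) = (x :: 'a::comm_ring_1 vec)"
proof -
  have "reflection_mat N j k *\<^sub>v (reflection_mat N j k *\<^sub>v x) =
      (reflection_mat N j k * reflection_mat N j k) *\<^sub>v x"
    by (rule assoc_mult_mat_vec[symmetric, OF reflection_mat_carrier reflection_mat_carrier assms(4)])
  then show ?thesis
    using assms by (simp add: reflection_mat_squared)
qed

lemma image_involution_Collect:
  assumes "\<And>x. x \<in> A \<Longrightarrow> f x \<in> A" "\<And>x. x \<in> A \<Longrightarrow> f (f x) = x"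
    and "\<And>x. x \<in> A \<Longrightarrow> Q (f x) \<longleftrightarrow> P x"
  shows "f ` {x \<in> A. P x} = {x \<in> A. Q x}"
proof
  show "f ` {x \<in> A. P x} \<subseteq> {x \<in> A. Q x}"
    using assms by auto
  show "{x \<in> A. Q x} \<subseteq> f ` {x \<in> A. P x}"
  proof
    fix y assume "y \<in> {x \<in> A. Q x}"
    then have "y = f (f y)" "f y \<in> {x \<in> A. P x}"
      using assms[of y] assms(3)[of "f y"] by auto
    then show "y \<in> f ` {x \<in> A. P x}"
      by blast
  qed
qed

definition in_labelled_line :: "nat \<Rightarrow> bool \<Rightarrow> label set \<Rightarrow> 'k::field vec \<Rightarrow> bool" where
  "in_labelled_line n deg3 L x \<longleftrightarrow>
     (\<forall>i\<le>n. i \<notin> (\<Union>l\<in>L. lidx l) \<longrightarrow> x $ i = 0) \<and>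
     (\<not> deg3 \<longrightarrow> (\<forall>p q. Diff p q \<in> L \<longrightarrow> x $ p = x $ q))"

lemma line_at_eq:
  assumes "\<forall>l\<in>lab ` edges_at V E v. lidx l \<subseteq> {0..pdim V E}"
  shows "(line_at V E lab v :: 'k::field vec set) =
    {x \<in> carrier_vec (pdim V E + 1). x \<noteq> 0\<^sub>v (pdim V E + 1) \<and>
       in_labelled_line (pdim V E) (deg E v = 3) (lab ` edges_at V E v) x}"
proof -
  let ?n = "pdim V E"
  have unit: "unit_vec (Suc ?n) i \<bullet> x = x $ i"
    if "x \<in> carrier_vec (Suc ?n)" "i \<le> ?n" for x :: "'k vec" and i
    using that by simp
  have diff: "(unit_vec (Suc ?n) p - unit_vec (Suc ?n) q) \<bullet> x = x $ p - x $ q"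
    if "x \<in> carrier_vec (Suc ?n)" "\<exists>t\<in>edges_at V E v. lab t = Diff p q" for x :: "'k vec" and p q
  proof -
    have "lidx (Diff p q) \<subseteq> {0..?n}"
      using that(2) assms by force
    then have "p \<le> ?n" "q \<le> ?n"
      by auto
    then show ?thesis
      using that(1) by (subst minus_scalar_prod_distrib[of _ "Suc ?n"]) auto
  qed
  have eqs: "(\<forall>f\<in>ideal_gens V E lab v. f \<bullet> x = 0) \<longleftrightarrow>
      in_labelled_line ?n (deg E v = 3) (lab ` edges_at V E v) x"
    if x: "x \<in> carrier_vec (?n + 1)" for x :: "'k vec"
  proof -
    have "(\<forall>f\<in>ideal_gens V E lab v. f \<bullet> x = 0) \<longleftrightarrow>
        (\<forall>i. i \<le> ?n \<and> i \<notin> appearing V E lab v \<longrightarrow> unit_vec (Suc ?n) i \<bullet> x = 0) \<and>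
        (deg E v \<noteq> 3 \<longrightarrow> (\<forall>p q. (\<exists>t\<in>edges_at V E v. lab t = Diff p q) \<longrightarrow>
            (unit_vec (Suc ?n) p - unit_vec (Suc ?n) q) \<bullet> x = 0))"
      by (simp add: ideal_gens_def Let_def ball_Un) fast
    also have "\<dots> \<longleftrightarrow> in_labelled_line ?n (deg E v = 3) (lab ` edges_at V E v) x"
      using x unfolding in_labelled_line_def appearing_def
      by (intro conj_cong all_cong imp_cong refl) (auto simp: unit diff image_iff eq_commute[of "Diff _ _"])
    finally show ?thesis .
  qed
  then show ?thesis
    unfolding line_at_def by (intro Collect_cong) blast
qed

abbreviation trivalent_labels :: "nat \<Rightarrow> nat \<Rightarrow> label set" where
  "trivalent_labels j k \<equiv> {Single j, Single k, Diff j k}"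

definition swap_label :: "nat \<Rightarrow> nat \<Rightarrow> label \<Rightarrow> label" where
  "swap_label j k l = (if l = Single j then Diff j k else if l = Diff j k then Single j else l)"

lemma in_labelled_line_split:
  fixes x :: "'k::field vec" and j k :: nat
  defines "T \<equiv> trivalent_labels j k"
  assumes "j \<le> n" "k \<le> n" "\<forall>l\<in>L - T. j \<notin> lidx l \<and> k \<notin> lidx l"
  shows "in_labelled_line n d L x \<longleftrightarrow>
    (\<forall>i\<le>n. i \<notin> {j, k} \<longrightarrow> i \<notin> (\<Union>l\<in>L - T. lidx l) \<longrightarrow> x $ i = 0) \<and>
    (\<not> d \<longrightarrow> (\<forall>p q. Diff p q \<in> L - T \<longrightarrow> x $ p = x $ q)) \<and>
    (j \<notin> (\<Union>l\<in>L \<inter> T. lidx l) \<longrightarrow> x $ j = 0) \<and>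
    (k \<notin> (\<Union>l\<in>L \<inter> T. lidx l) \<longrightarrow> x $ k = 0) \<and>
    (\<not> d \<and> Diff j k \<in> L \<inter> T \<longrightarrow> x $ j = x $ k)"
proof -
  let ?I = "\<lambda>M. \<Union>l\<in>M. lidx l"
  have T_idx: "?I T = {j, k}"
    unfolding T_def by auto
  have "i \<in> ?I L \<longleftrightarrow> i \<in> ?I (L - T) \<or> i \<in> ?I (L \<inter> T)" for i
    by blast
  then have idx_other: "i \<notin> {j, k} \<Longrightarrow> i \<in> ?I L \<longleftrightarrow> i \<in> ?I (L - T)"
    and idx_jk: "i \<in> {j, k} \<Longrightarrow> i \<in> ?I L \<longleftrightarrow> i \<in> ?I (L \<inter> T)" for i
    using T_idx assms(4) by blast+
  have idx_j: "j \<in> ?I L \<longleftrightarrow> j \<in> ?I (L \<inter> T)" and idx_k: "k \<in> ?I L \<longleftrightarrow> k \<in> ?I (L \<inter> T)"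
    using idx_jk[of j] idx_jk[of k] by blast+
  have "(\<forall>i\<le>n. i \<notin> ?I L \<longrightarrow> x $ i = 0) \<longleftrightarrow>
      (\<forall>i\<le>n. i \<notin> {j, k} \<longrightarrow> i \<notin> ?I L \<longrightarrow> x $ i = 0) \<and>
      (j \<notin> ?I L \<longrightarrow> x $ j = 0) \<and> (k \<notin> ?I L \<longrightarrow> x $ k = 0)"
    using assms(2,3) by blast
  also have "\<dots> \<longleftrightarrow>
      (\<forall>i\<le>n. i \<notin> {j, k} \<longrightarrow> i \<notin> ?I (L - T) \<longrightarrow> x $ i = 0) \<and>
      (j \<notin> ?I (L \<inter> T) \<longrightarrow> x $ j = 0) \<and> (k \<notin> ?I (L \<inter> T) \<longrightarrow> x $ k = 0)"
    unfolding idx_j idx_k using idx_other by blast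
  finally have vanish: "(\<forall>i\<le>n. i \<notin> ?I L \<longrightarrow> x $ i = 0) \<longleftrightarrow>
      (\<forall>i\<le>n. i \<notin> {j, k} \<longrightarrow> i \<notin> ?I (L - T) \<longrightarrow> x $ i = 0) \<and>
      (j \<notin> ?I (L \<inter> T) \<longrightarrow> x $ j = 0) \<and> (k \<notin> ?I (L \<inter> T) \<longrightarrow> x $ k = 0)" .
  have "Diff p q \<in> L \<longleftrightarrow> Diff p q \<in> L - T \<or> (p = j \<and> q = k \<and> Diff j k \<in> L \<inter> T)" for p q
    unfolding T_def by auto
  then have diffs: "(\<forall>p q. Diff p q \<in> L \<longrightarrow> x $ p = x $ q) \<longleftrightarrow>
      (\<forall>p q. Diff p q \<in> L - T \<longrightarrow> x $ p = x $ q) \<and> (Diff j k \<in> L \<inter> T \<longrightarrow> x $ j = x $ k)"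
    by blast
  show ?thesis
    unfolding in_labelled_line_def vanish diffs by blast
qed

lemma swap_label_image_diff_trivalent:
  "swap_label j k ` L - trivalent_labels j k = L - trivalent_labels j k"
  unfolding swap_label_def by force

lemma swap_label_image_Int_trivalent:
  "swap_label j k ` L \<inter> trivalent_labels j k = swap_label j k ` (L \<inter> trivalent_labels j k)"
  unfolding swap_label_def by force

lemma in_labelled_line_swap_label:
  fixes x y :: "'k::field vec" and j k :: nat
  defines "T \<equiv> trivalent_labels j k"
  assumes jk: "j \<noteq> k" "j \<le> n" "k \<le> n"
    and bounded: "\<forall>l\<in>L. lidx l \<subseteq> {0..n}"
    and avoid: "\<forall>l\<in>L - T. j \<notin> lidx l \<and> k \<notin> lidx l"
    and meets: "L \<inter> T = T \<and> d \<or> (\<exists>l. L \<inter> T \<subseteq> {l}) \<and> (L \<inter> T \<noteq> {} \<longrightarrow> \<not> d)"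
    and y: "\<forall>i\<le>n. y $ i = (if i = k then x $ j - x $ k else x $ i)"
  shows "in_labelled_line n d (swap_label j k ` L) y \<longleftrightarrow> in_labelled_line n d L x"
proof -
  let ?L' = "swap_label j k ` L" and ?P = "L \<inter> T"
  define away where "away z \<longleftrightarrow>
      (\<forall>i\<le>n. i \<notin> {j, k} \<longrightarrow> i \<notin> (\<Union>l\<in>L - T. lidx l) \<longrightarrow> z $ i = 0) \<and>
      (\<not> d \<longrightarrow> (\<forall>p q. Diff p q \<in> L - T \<longrightarrow> z $ p = z $ q))" for z :: "'k vec"
  define near where "near M z \<longleftrightarrow>
      (j \<notin> (\<Union>l\<in>M. lidx l) \<longrightarrow> z $ j = 0) \<and> (k \<notin> (\<Union>l\<in>M. lidx l) \<longrightarrow> z $ k = 0) \<and>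
      (\<not> d \<and> Diff j k \<in> M \<longrightarrow> z $ j = z $ k)" for M and z :: "'k vec"
  have "in_labelled_line n d L x \<longleftrightarrow> away x \<and> near ?P x"
    using in_labelled_line_split[OF jk(2,3) avoid[unfolded T_def]]
    unfolding away_def near_def T_def by simp
  moreover have "in_labelled_line n d ?L' y \<longleftrightarrow> away y \<and> near (swap_label j k ` ?P) y"
    using in_labelled_line_split[OF jk(2,3), of ?L'] avoid
    unfolding away_def near_def T_def swap_label_image_diff_trivalent swap_label_image_Int_trivalent
    by simp
  moreover have "y $ p = x $ p" "y $ q = x $ q" if "Diff p q \<in> L - T" for p q
    using that bounded avoid y by (auto dest!: bspec[OF _ that])
  then have "away y \<longleftrightarrow> away x"
    unfolding away_def using y by auto
  moreover have "near (swap_label j k ` ?P) y \<longleftrightarrow> near ?P x"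
  proof -
    have "?P \<subseteq> T"
      by blast
    have "?P = T \<and> d \<or> ?P = {} \<or> (\<exists>l\<in>T. ?P = {l}) \<and> \<not> d"
      using meets \<open>?P \<subseteq> T\<close> by (metis insert_subset subset_singletonD)
    then consider "?P = {}" | "?P = {Single j}" "\<not> d" | "?P = {Single k}" "\<not> d"
      | "?P = {Diff j k}" "\<not> d" | "?P = T" "d"
      unfolding T_def by blast
    moreover have "y $ j = x $ j" "y $ k = x $ j - x $ k"
      using jk y by simp_all
    ultimately show ?thesis
      using jk unfolding near_def T_def by cases (auto simp: swap_label_def)
  qed
  ultimately show ?thesis
    by blast
qed

lemma edges_at_subset_tedges: "edges_at V E v \<subseteq> tedges V E"
  unfolding edges_at_def by blast

lemma edges_at_nonleaf:
  assumes "simple_graph V E" "deg E w \<noteq> 1" "t \<in> edges_at V E w"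
  shows "\<exists>u. u \<noteq> w \<and> adj E w u \<and> t = GEdge {w, u}"
proof (cases t)
  case (Loop u)
  then show ?thesis
    using assms(2,3) unfolding edges_at_def tedges_def by auto
next
  case (GEdge e)
  then have "e \<in> E" "w \<in> e"
    using assms(3) unfolding edges_at_def tedges_def by auto
  then obtain u where "u \<noteq> w" "e = {w, u}"
    using assms(1) unfolding simple_graph_def by (metis insert_commute insert_iff singletonD)
  then show ?thesis
    using \<open>e \<in> E\<close> GEdge unfolding adj_def by blast
qed

lemma edges_at_nonleaf_meet_once:
  assumes "simple_graph V E" "deg E w \<noteq> 1"
    and "t1 \<in> edges_at V E w" "t2 \<in> edges_at V E w"
    and "v \<noteq> w" "incident t1 v" "incident t2 v"
  shows "t1 = t2"
  using edges_at_nonleaf[OF assms(1,2,3)] edges_at_nonleaf[OF assms(1,2,4)] assms(5-7) by auto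

lemma good_graph_deg3_no_common_edge:
  assumes "good_graph V E" "w \<in> V" "z \<in> V" "deg E w = 3" "deg E z = 3"
    and "t \<in> edges_at V E w" "incident t z"
  shows "z = w"
proof (rule ccontr)
  assume "z \<noteq> w"
  have "simple_graph V E"
    using assms(1) unfolding good_graph_def by blast
  then obtain u where "adj E w u" "t = GEdge {w, u}"
    using edges_at_nonleaf[of V E w t] assms(4,6) by auto
  with \<open>z \<noteq> w\<close> \<open>incident t z\<close> have "adj E w z"
    by auto
  then show False
    using assms(1-5) \<open>z \<noteq> w\<close> unfolding good_graph_def by metis
qed

locale trivalent_vertex =
  fixes V :: "'v set" and E :: "'v set set" and lab :: "'v tedge \<Rightarrow> label"
    and w :: 'v and a b c :: "'v tedge" and j k :: nat
  assumes good: "good_graph V E" and admissible: "admissible V E lab"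
    and w: "w \<in> V" "deg E w = 3"
    and abc: "a \<in> edges_at V E w" "b \<in> edges_at V E w" "c \<in> edges_at V E w"
    and labels: "lab a = Single j" "lab b = Single k" "lab c = Diff j k"
begin

lemma simple: "simple_graph V E"
  using good unfolding good_graph_def by blast

lemma edges_at_w: "edges_at V E w = {a, b, c}" and j_neq_k: "j \<noteq> k"
proof -
  obtain j' k' where "j' \<noteq> k'" and inj: "inj_on lab (edges_at V E w)"
    and img: "lab ` edges_at V E w = {Single j', Single k', Diff j' k'}"
    using admissible w unfolding admissible_def by blast
  moreover have "Diff j k \<in> lab ` edges_at V E w"
    using abc(3) labels(3) by (metis imageI)
  ultimately have "j' = j" "k' = k"
    by auto
  with \<open>j' \<noteq> k'\<close> show "j \<noteq> k"
    by simp
  have "lab ` edges_at V E w = lab ` {a, b, c}"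
    using img labels \<open>j' = j\<close> \<open>k' = k\<close> by auto
  moreover have "{a, b, c} \<subseteq> edges_at V E w"
    using abc by blast
  ultimately show "edges_at V E w = {a, b, c}"
    using inj_on_image_eq_iff[OF inj order_refl] by blast
qed

lemma tedges_bounded: "t \<in> tedges V E \<Longrightarrow> lidx (lab t) \<subseteq> {0..pdim V E}"
  using admissible unfolding admissible_def by blast

lemma jk_bounded: "j \<le> pdim V E" "k \<le> pdim V E"
  using tedges_bounded[of a] tedges_bounded[of b] abc labels edges_at_subset_tedges[of V E w] by auto

lemma indices_private:
  assumes "t \<in> tedges V E" "t \<notin> {a, b, c}"
  shows "j \<notin> lidx (lab t)" "k \<notin> lidx (lab t)"
proof -
  have avoid: "i \<notin> lidx (lab t)" if "s \<in> {a, b, c}" "i \<in> lidx (lab s)" for s i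
  proof
    assume "i \<in> lidx (lab t)"
    then have "lidx (lab s) \<inter> lidx (lab t) \<noteq> {}" "s \<noteq> t" "s \<in> tedges V E"
      using that assms abc edges_at_subset_tedges[of V E w] by auto
    then obtain z where "z \<in> V" "deg E z = 3" "incident s z" "incident t z"
      using admissible assms(1) unfolding admissible_def by metis
    moreover have "s \<in> edges_at V E w"
      using that(1) abc by blast
    ultimately have "z = w"
      using good_graph_deg3_no_common_edge good w by metis
    then show False
      using assms \<open>incident t z\<close> edges_at_w unfolding edges_at_def by blast
  qed
  show "j \<notin> lidx (lab t)" "k \<notin> lidx (lab t)"
    using avoid[of a j] avoid[of b k] labels by simp_all
qed

lemma relabel_eq_swap_label:
  assumes "t \<in> tedges V E"
  shows "(lab(a := Diff j k, c := Single j)) t = swap_label j k (lab t)"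
proof -
  consider "t = a" | "t = b" | "t = c" | "t \<notin> {a, b, c}"
    by blast
  then show ?thesis
  proof cases
    case 4
    then show ?thesis
      using indices_private[OF assms] by (auto simp: swap_label_def)
  qed (use labels j_neq_k in \<open>auto simp: swap_label_def\<close>)
qed

lemma labels_at_trivalent:
  "lab ` edges_at V E v \<inter> trivalent_labels j k = lab ` (edges_at V E v \<inter> {a, b, c})"
proof -
  have "lab t \<notin> trivalent_labels j k" if "t \<in> edges_at V E v" "t \<notin> {a, b, c}" for t
  proof -
    have "t \<in> tedges V E"
      using that(1) edges_at_subset_tedges[of V E v] by blast
    then show ?thesis
      using indices_private[OF _ that(2)] by auto
  qed
  then show ?thesis
    using labels by auto
qed

lemma labels_at_avoid:
  "\<forall>l\<in>lab ` edges_at V E v - trivalent_labels j k. j \<notin> lidx l \<and> k \<notin> lidx l"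
  using indices_private labels edges_at_subset_tedges[of V E v] by fastforce

lemma labels_at_meet_trivalent:
  assumes "v \<in> V"
  defines "P \<equiv> lab ` edges_at V E v \<inter> trivalent_labels j k"
  shows "P = trivalent_labels j k \<and> deg E v = 3 \<or> (\<exists>l. P \<subseteq> {l}) \<and> (P \<noteq> {} \<longrightarrow> deg E v \<noteq> 3)"
proof (cases "v = w")
  case True
  then show ?thesis
    using w labels unfolding P_def labels_at_trivalent True edges_at_w by auto
next
  case False
  have "t1 = t2" if "t1 \<in> edges_at V E v \<inter> {a, b, c}" "t2 \<in> edges_at V E v \<inter> {a, b, c}" for t1 t2
    using edges_at_nonleaf_meet_once[OF simple _ _ _ False] that w(2) abc
    unfolding edges_at_def by auto
  then have "\<exists>l. P \<subseteq> {l}"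
    unfolding P_def labels_at_trivalent by blast
  moreover have "deg E v \<noteq> 3" if "t \<in> edges_at V E v \<inter> {a, b, c}" for t
    using good_graph_deg3_no_common_edge[OF good w(1) assms(1) w(2) _ _] that abc False
    unfolding edges_at_def by auto
  ultimately show ?thesis
    unfolding P_def labels_at_trivalent by blast
qed

lemma line_at_relabel:
  assumes "v \<in> V"
  shows "(\<lambda>x. reflection_mat (pdim V E + 1) j k *\<^sub>v x) ` (line_at V E lab v :: 'k::field vec set) =
    line_at V E (lab(a := Diff j k, c := Single j)) v"
proof -
  let ?n = "pdim V E" and ?L = "lab ` edges_at V E v" and ?d = "deg E v = 3"
  let ?\<sigma> = "reflection_mat (?n + 1) j k :: 'k mat"
  have bounded: "\<forall>l\<in>?L. lidx l \<subseteq> {0..?n}"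
    using tedges_bounded edges_at_subset_tedges[of V E v] by blast
  have relabel: "(lab(a := Diff j k, c := Single j)) ` edges_at V E v = swap_label j k ` ?L"
    unfolding image_image
    by (intro image_cong refl) (use relabel_eq_swap_label edges_at_subset_tedges[of V E v] in blast)
  have "\<forall>l\<in>swap_label j k ` ?L. lidx l \<subseteq> {0..?n}"
    using bounded jk_bounded by (auto simp: swap_label_def)
  then have line': "(line_at V E (lab(a := Diff j k, c := Single j)) v :: 'k vec set) =
      {x \<in> carrier_vec (?n + 1). x \<noteq> 0\<^sub>v (?n + 1) \<and> in_labelled_line ?n ?d (swap_label j k ` ?L) x}"
    using line_at_eq[of "lab(a := Diff j k, c := Single j)" V E v] unfolding relabel by blast
  have \<sigma>: "?\<sigma> *\<^sub>v x \<in> carrier_vec (?n + 1)" "?\<sigma> *\<^sub>v (?\<sigma> *\<^sub>v x) = x"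
    "\<forall>i\<le>?n. (?\<sigma> *\<^sub>v x) $ i = (if i = k then x $ j - x $ k else x $ i)"
    if "x \<in> carrier_vec (?n + 1)" for x
    using that j_neq_k jk_bounded
    by (auto simp: mult_mat_vec_carrier[OF reflection_mat_carrier] reflection_mat_involution
        reflection_mat_mult_vec_index)
  have "?\<sigma> *\<^sub>v 0\<^sub>v (?n + 1) = 0\<^sub>v (?n + 1)"
    using \<sigma>(3)[OF zero_carrier_vec] jk_bounded
    by (intro eq_vecI) (auto simp: reflection_mat_carrier[THEN carrier_matD(1)])
  then have "?\<sigma> *\<^sub>v x \<noteq> 0\<^sub>v (?n + 1) \<longleftrightarrow> x \<noteq> 0\<^sub>v (?n + 1)" if "x \<in> carrier_vec (?n + 1)" for x
    using \<sigma>(2)[OF that] by metis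
  moreover have "in_labelled_line ?n ?d (swap_label j k ` ?L) (?\<sigma> *\<^sub>v x) \<longleftrightarrow> in_labelled_line ?n ?d ?L x"
    if "x \<in> carrier_vec (?n + 1)" for x
    using in_labelled_line_swap_label[OF j_neq_k jk_bounded bounded labels_at_avoid
        labels_at_meet_trivalent[OF assms] \<sigma>(3)[OF that]] .
  ultimately show ?thesis
    unfolding line_at_eq[OF bounded] line' using \<sigma>(1,2) by (intro image_involution_Collect) auto
qed

end

theorem lemma1p6:
  fixes V :: "'v set" and E :: "'v set set" and lab :: "'v tedge \<Rightarrow> label"
    and w :: 'v and a b c :: "'v tedge" and j k :: nat
  assumes "good_graph V E"
    and "admissible V E lab"
    and "w \<in> V" and "deg E w = 3"
    and "a \<in> edges_at V E w" and "b \<in> edges_at V E w" and "c \<in> edges_at V E w"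
    and "lab a = Single j" and "lab b = Single k" and "lab c = Diff j k"
  shows "\<exists>\<sigma> :: 'k :: {alg_closed_field, field_char_0} mat.
           \<sigma> \<in> carrier_mat (pdim V E + 1) (pdim V E + 1) \<and> invertible_mat \<sigma> \<and>
           (\<exists>s. s \<noteq> 0 \<and> \<sigma> * \<sigma> = s \<cdot>\<^sub>m 1\<^sub>m (pdim V E + 1)) \<and>
           (\<lambda>x. \<sigma> *\<^sub>v x) ` (CG V E lab :: 'k vec set) = CG V E (lab(a := Diff j k, c := Single j))"
proof -
  interpret trivalent_vertex V E lab w a b c j k
    using assms by unfold_locales
  let ?N = "pdim V E + 1"
  let ?\<sigma> = "reflection_mat ?N j k :: 'k mat"
  have carrier: "?\<sigma> \<in> carrier_mat ?N ?N"
    by (rule reflection_mat_carrier)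
  have squared: "?\<sigma> * ?\<sigma> = 1\<^sub>m ?N"
    using jk_bounded by (intro reflection_mat_squared j_neq_k) auto
  then have "invertible_mat ?\<sigma>"
    using carrier unfolding invertible_mat_def inverts_mat_def by auto
  moreover have "(\<lambda>x. ?\<sigma> *\<^sub>v x) ` CG V E lab = CG V E (lab(a := Diff j k, c := Single j))"
    unfolding CG_def image_UN by (rule SUP_cong[OF refl line_at_relabel])
  ultimately show ?thesis
    using carrier squared by (intro exI[of _ ?\<sigma>] conjI exI[of _ 1]) auto
qed

end
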